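(* Let $p\in(0,1]$ and let $\mathcal{D}$ be a distribution supported on $[0,1]$ with $Q=\sup\{y:\Pr_{x\sim\mathcal{D}}(x\le y)\le p\}$. Consider the scoring rule $f_p$ in which each voter gives $\sum_{\ell=k}^m\binom{m}{\ell}(1-p)^\ell p^{m-\ell}$ points to the alternative she ranks in position $k$ (selecting an alternative with largest total score, ties broken arbitrarily). Then for all $n,m$ and every preference profile $\sigma$, $\mathbb{E}[\mathrm{sw}(f_p(\sigma),u)]\ge(1-p)Q\max_{j\in A}\mathbb{E}[\mathrm{sw}(j,u)]$.
   Context: There are $n$ voters and $m$ alternatives $A=\{1,\dots,m\}$. A preference profile $\sigma$ consists of a ranking of $A$ for each voter; position $1$ is the top. Given $\mathcal{D}$ and $\sigma$, a random utility profile $u$ consistent with $\sigma$ is generated as follows: independently for each voter $i$, draw $m$ i.i.d. samples from $\mathcal{D}$ and assign them, from highest to lowest, to the alternatives in the order of voter $i$'s ranking. The social welfare of $j$ is $\mathrm{sw}(j,u)=\sum_i u_{ij}$; expectations are over $u$. *)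

theory Defs
  imports "HOL-Probability.Probability"
begin

text \<open>Alternatives are 1..m, voters are 1..n, positions are 1..m (1 = top).
  A preference profile is given by pos i j = position of alternative j in voter i's ranking;
  it is a profile iff each pos i is a bijection of {1..m} onto {1..m}.\<close>

definition is_profile :: "nat \<Rightarrow> nat \<Rightarrow> (nat \<Rightarrow> nat \<Rightarrow> nat) \<Rightarrow> bool" where
  "is_profile n m pos \<longleftrightarrow> (\<forall>i\<in>{1..n}. bij_betw (pos i) {1..m} {1..m})"

definition kth_largest :: "(nat \<Rightarrow> real) \<Rightarrow> nat \<Rightarrow> nat \<Rightarrow> real" where
  "kth_largest v m k = rev (sort (map v [1..<m+1])) ! (k - 1)"

text \<open>The sample space: for each voter i and each index t \<in> {1..m}, an independent sample
  s (i,t) from D. The utility of voter i for alternative j is the pos i j-th largest of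
  voter i's m samples.\<close>
definition sample_space :: "real measure \<Rightarrow> nat \<Rightarrow> nat \<Rightarrow> (nat \<times> nat \<Rightarrow> real) measure" where
  "sample_space D n m = PiM ({1..n} \<times> {1..m}) (\<lambda>_. D)"

definition utility :: "nat \<Rightarrow> (nat \<Rightarrow> nat \<Rightarrow> nat) \<Rightarrow> (nat \<times> nat \<Rightarrow> real) \<Rightarrow> nat \<Rightarrow> nat \<Rightarrow> real" where
  "utility m pos s i j = kth_largest (\<lambda>t. s (i, t)) m (pos i j)"

definition sw :: "nat \<Rightarrow> nat \<Rightarrow> (nat \<Rightarrow> nat \<Rightarrow> nat) \<Rightarrow> (nat \<times> nat \<Rightarrow> real) \<Rightarrow> nat \<Rightarrow> real" where
  "sw n m pos s j = (\<Sum>i\<in>{1..n}. utility m pos s i j)"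

definition expected_sw :: "real measure \<Rightarrow> nat \<Rightarrow> nat \<Rightarrow> (nat \<Rightarrow> nat \<Rightarrow> nat) \<Rightarrow> nat \<Rightarrow> real" where
  "expected_sw D n m pos j = (\<integral>s. sw n m pos s j \<partial>sample_space D n m)"

definition fp_points :: "real \<Rightarrow> nat \<Rightarrow> nat \<Rightarrow> real" where
  "fp_points p m k = (\<Sum>l=k..m. real (m choose l) * (1 - p) ^ l * p ^ (m - l))"

definition fp_score :: "real \<Rightarrow> nat \<Rightarrow> nat \<Rightarrow> (nat \<Rightarrow> nat \<Rightarrow> nat) \<Rightarrow> nat \<Rightarrow> real" where
  "fp_score p n m pos j = (\<Sum>i\<in>{1..n}. fp_points p m (pos i j))"

text \<open>f_p may select any alternative of maximal total score (ties broken arbitrarily).\<close>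
definition fp_winner :: "real \<Rightarrow> nat \<Rightarrow> nat \<Rightarrow> (nat \<Rightarrow> nat \<Rightarrow> nat) \<Rightarrow> nat \<Rightarrow> bool" where
  "fp_winner p n m pos w \<longleftrightarrow> w \<in> {1..m} \<and> (\<forall>j\<in>{1..m}. fp_score p n m pos j \<le> fp_score p n m pos w)"

definition quantile_Q :: "real measure \<Rightarrow> real \<Rightarrow> real" where
  "quantile_Q D p = Sup {y. measure D {x. x \<le> y} \<le> p}"

end

theory Submission
  imports Defs
begin

text \<open>Let \<open>Q\<close> be the \<open>p\<close>-quantile of \<open>\<D>\<close>, so that a single sample is at least \<open>Q\<close> with
  probability \<open>q \<ge> 1 - p\<close>. The alternative a voter ranks in position \<open>k\<close> has utility at least \<open>Q\<close>
  whenever at least \<open>k\<close> of the voter's \<open>m\<close> samples are at least \<open>Q\<close>, an event of probability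
  \<open>P(Bin(m, q) \<ge> k) \<ge> P(Bin(m, 1 - p) \<ge> k)\<close>, and the latter is exactly the number of points
  \<open>f\<^sub>p\<close> awards to position \<open>k\<close>. Hence the expected welfare of any alternative is at least \<open>Q\<close> times
  its score. Each voter hands out \<open>E[Bin(m, 1 - p)] = m (1 - p)\<close> points in total, so the winner
  scores at least \<open>n (1 - p)\<close>, whereas no alternative has expected welfare above \<open>n\<close> because
  utilities lie in \<open>[0, 1]\<close>.\<close>

section \<open>Binomial tails\<close>

definition binomial_tail :: "nat set \<Rightarrow> nat \<Rightarrow> real \<Rightarrow> real" where
  "binomial_tail T k q = (\<Sum>S | S \<subseteq> T \<and> k \<le> card S. q ^ card S * (1 - q) ^ card (T - S))"

lemma binomial_tail_antimono:
  assumes "finite T" "0 \<le> q" "q \<le> 1" "k' \<le> k"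
  shows "binomial_tail T k q \<le> binomial_tail T k' q"
  unfolding binomial_tail_def by (rule sum_mono2) (use assms in auto)

lemma binomial_tail_empty: "binomial_tail {} k q = (if k = 0 then 1 else 0)"
  by (cases "k = 0") (auto simp: binomial_tail_def)

lemma subsets_insert_card_ge:
  assumes T: "finite T" and a: "a \<notin> T"
  shows "{S. S \<subseteq> insert a T \<and> k \<le> card S} =
    {S. S \<subseteq> T \<and> k \<le> card S} \<union> insert a ` {S. S \<subseteq> T \<and> k - 1 \<le> card S}"
    (is "_ = ?A \<union> insert a ` ?B")
proof (intro equalityI subsetI)
  have card_insert: "card (insert a S) = Suc (card S)" if "S \<subseteq> T" for S
    using that a T by (meson finite_subset card_insert_disjoint subsetD)
  fix S assume S: "S \<in> {S. S \<subseteq> insert a T \<and> k \<le> card S}"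
  show "S \<in> ?A \<union> insert a ` ?B"
  proof (cases "a \<in> S")
    case True
    then have "S - {a} \<subseteq> T" "S = insert a (S - {a})" using S by auto
    moreover from this have "card S = Suc (card (S - {a}))"
      using True card_insert[of "S - {a}"] by (simp add: insert_absorb)
    then have "k - 1 \<le> card (S - {a})" using S by auto
    ultimately show ?thesis by blast
  next
    case False
    then show ?thesis using S by auto
  qed
next
  fix S assume "S \<in> ?A \<union> insert a ` ?B"
  then show "S \<in> {S. S \<subseteq> insert a T \<and> k \<le> card S}"
  proof
    assume "S \<in> insert a ` ?B"
    then obtain S' where "S' \<in> ?B" "S = insert a S'" by blast
    moreover from this have "finite S'" "a \<notin> S'" using T a rev_finite_subset by auto
    ultimately show ?thesis by auto
  qed auto
qed

lemma binomial_tail_insert: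
  assumes T: "finite T" and a: "a \<notin> T"
  shows "binomial_tail (insert a T) k q = (1 - q) * binomial_tail T k q + q * binomial_tail T (k - 1) q"
proof -
  let ?w = "\<lambda>U S. q ^ card S * (1 - q) ^ card (U - S)"
  define A where "A = {S. S \<subseteq> T \<and> k \<le> card S}"
  define B where "B = {S. S \<subseteq> T \<and> k - 1 \<le> card S}"
  have fin: "finite A" "finite B" using T unfolding A_def B_def by auto
  have disjoint: "A \<inter> insert a ` B = {}" using a unfolding A_def B_def by auto
  have inj: "inj_on (insert a) B"
    unfolding B_def inj_on_def using a by (metis Diff_insert_absorb in_mono mem_Collect_eq)
  have "(\<Sum>S\<in>A. ?w (insert a T) S) = (\<Sum>S\<in>A. (1 - q) * ?w T S)"
  proof (rule sum.cong[OF refl])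
    fix S assume "S \<in> A"
    then have "insert a T - S = insert a (T - S)" "a \<notin> T - S" using a unfolding A_def by auto
    then show "?w (insert a T) S = (1 - q) * ?w T S" using T by simp
  qed
  moreover have "(\<Sum>S\<in>insert a ` B. ?w (insert a T) S) = (\<Sum>S\<in>B. q * ?w T S)"
  proof (subst sum.reindex[OF inj], rule sum.cong[OF refl])
    fix S assume "S \<in> B"
    then have "S \<subseteq> T" unfolding B_def by auto
    then have "insert a T - insert a S = T - S" "finite S" "a \<notin> S"
      using a T rev_finite_subset by auto
    then show "(?w (insert a T) \<circ> insert a) S = q * ?w T S" by simp
  qed
  ultimately show ?thesis
    unfolding binomial_tail_def subsets_insert_card_ge[OF T a] A_def[symmetric] B_def[symmetric]
      sum.union_disjoint[OF fin(1) finite_imageI[OF fin(2)] disjoint]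
    by (simp add: A_def B_def sum_distrib_left)
qed

lemma binomial_tail_mono:
  assumes "finite T" "0 \<le> r" "r \<le> q" "q \<le> 1"
  shows "binomial_tail T k r \<le> binomial_tail T k q"
  using assms(1)
proof (induction T arbitrary: k rule: finite_induct)
  case empty
  then show ?case by (simp add: binomial_tail_empty)
next
  case (insert a T)
  let ?t = "binomial_tail T"
  have "?t k r \<le> ?t (k - 1) r" by (rule binomial_tail_antimono) (use insert assms in auto)
  then have "0 \<le> (q - r) * (?t (k - 1) r - ?t k r)"
    using assms by simp
  then have "(1 - r) * ?t k r + r * ?t (k - 1) r \<le> (1 - q) * ?t k r + q * ?t (k - 1) r"
    by (simp add: algebra_simps)
  also have "\<dots> \<le> (1 - q) * ?t k q + q * ?t (k - 1) q"
    using insert.IH assms by (intro add_mono mult_left_mono) auto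
  finally show ?case by (simp add: binomial_tail_insert insert.hyps)
qed

lemma binomial_tail_eq_sum_choose:
  assumes T: "finite T"
  shows "binomial_tail T k q = (\<Sum>l=k..card T. real (card T choose l) * q ^ l * (1 - q) ^ (card T - l))"
proof -
  let ?F = "{S. S \<subseteq> T \<and> k \<le> card S}"
  let ?w = "\<lambda>S. q ^ card S * (1 - q) ^ card (T - S)"
  have "card ` ?F \<subseteq> {k..card T}"
    using T by (auto intro: card_mono)
  then have "binomial_tail T k q = (\<Sum>l=k..card T. \<Sum>S\<in>{S \<in> ?F. card S = l}. ?w S)"
    unfolding binomial_tail_def by (intro sum.group[symmetric]) (use T in auto)
  also have "\<dots> = (\<Sum>l=k..card T. \<Sum>S | S \<subseteq> T \<and> card S = l. q ^ l * (1 - q) ^ (card T - l))"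
  proof (intro sum.cong)
    fix l assume "l \<in> {k..card T}"
    then show "{S \<in> ?F. card S = l} = {S. S \<subseteq> T \<and> card S = l}" by auto
  next
    fix l S assume "S \<in> {S. S \<subseteq> T \<and> card S = l}"
    then show "?w S = q ^ l * (1 - q) ^ (card T - l)"
      using T by (simp add: card_Diff_subset rev_finite_subset)
  qed simp
  also have "\<dots> = (\<Sum>l=k..card T. real (card T choose l) * q ^ l * (1 - q) ^ (card T - l))"
    using n_subsets[OF T] by (simp add: mult.assoc)
  finally show ?thesis .
qed

section \<open>Scores of \<open>f\<^sub>p\<close>\<close>

lemma fp_points_eq_binomial_tail: "fp_points p m k = binomial_tail {1..m} k (1 - p)"
  unfolding fp_points_def binomial_tail_eq_sum_choose[OF finite_atLeastAtMost] by simp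

lemma sum_atLeastAtMost_tails:
  fixes f :: "nat \<Rightarrow> 'a :: comm_semiring_1"
  shows "(\<Sum>k=1..m. \<Sum>l=k..m. f l) = (\<Sum>l=1..m. of_nat l * f l)"
proof (induction m)
  case (Suc m)
  have "(\<Sum>k=1..Suc m. \<Sum>l=k..Suc m. f l) = (\<Sum>k=1..m. \<Sum>l=k..Suc m. f l) + f (Suc m)"
    by simp
  also have "\<dots> = (\<Sum>k=1..m. (\<Sum>l=k..m. f l) + f (Suc m)) + f (Suc m)"
    by (subst sum.cong[OF refl]) auto
  also have "\<dots> = (\<Sum>k=1..m. \<Sum>l=k..m. f l) + of_nat (Suc m) * f (Suc m)"
    by (simp add: sum.distrib algebra_simps)
  finally show ?case using Suc.IH by simp
qed simp

lemma sum_fp_points: "(\<Sum>k=1..m. fp_points p m k) = real m * (1 - p)"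
proof (cases m)
  case (Suc m')
  have "(\<Sum>k=1..m. fp_points p m k) = (\<Sum>l=1..m. real l * (real (m choose l) * (1 - p) ^ l * p ^ (m - l)))"
    unfolding fp_points_def by (rule sum_atLeastAtMost_tails)
  also have "\<dots> = (\<Sum>l=0..m'. real (Suc l) * (real (m choose Suc l) * (1 - p) ^ Suc l * p ^ (m - Suc l)))"
    unfolding Suc by (subst sum.shift_bounds_cl_Suc_ivl[symmetric]) simp
  also have "\<dots> = (\<Sum>l\<le>m'. real m * (1 - p) * (real (m' choose l) * (1 - p) ^ l * p ^ (m' - l)))"
    unfolding Suc atLeast0AtMost
  proof (intro sum.cong refl)
    fix l
    have "real (Suc l) * real (Suc m' choose Suc l) = real (Suc m') * real (m' choose l)"
      by (metis Suc_times_binomial_eq mult.commute of_nat_mult)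
    then show "real (Suc l) * (real (Suc m' choose Suc l) * (1 - p) ^ Suc l * p ^ (Suc m' - Suc l))
      = real (Suc m') * (1 - p) * (real (m' choose l) * (1 - p) ^ l * p ^ (m' - l))"
      by (metis (no_types, lifting) diff_Suc_Suc mult.assoc mult.left_commute power_Suc)
  qed
  also have "\<dots> = real m * (1 - p) * ((1 - p) + p) ^ m'"
    by (simp only: binomial_ring sum_distrib_left)
  finally show ?thesis by simp
qed simp

lemma profile_position_mem:
  assumes "is_profile n m pos" "i \<in> {1..n}" "j \<in> {1..m}"
  shows "pos i j \<in> {1..m}"
  using assms unfolding is_profile_def by (meson bij_betwE)

lemma sum_fp_score:
  assumes "is_profile n m pos"
  shows "(\<Sum>j\<in>{1..m}. fp_score p n m pos j) = real n * (real m * (1 - p))"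
proof -
  have "(\<Sum>j\<in>{1..m}. fp_score p n m pos j) = (\<Sum>i\<in>{1..n}. \<Sum>j\<in>{1..m}. fp_points p m (pos i j))"
    unfolding fp_score_def by (rule sum.swap)
  also have "\<dots> = (\<Sum>i\<in>{1..n}. \<Sum>k\<in>{1..m}. fp_points p m k)"
    using assms unfolding is_profile_def by (intro sum.cong refl sum.reindex_bij_betw) auto
  also have "\<dots> = real n * (real m * (1 - p))"
    using sum_fp_points[of p m] by simp
  finally show ?thesis .
qed

lemma fp_winner_score_ge:
  assumes "is_profile n m pos" "fp_winner p n m pos w"
  shows "real n * (1 - p) \<le> fp_score p n m pos w"
proof -
  have "real m * (real n * (1 - p)) = (\<Sum>j\<in>{1..m}. fp_score p n m pos j)"
    using sum_fp_score[OF assms(1)] by simp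
  also have "\<dots> \<le> real m * fp_score p n m pos w"
    using sum_bounded_above[of "{1..m}" "fp_score p n m pos" "fp_score p n m pos w"] assms(2)
    unfolding fp_winner_def by auto
  finally show ?thesis
    using assms(2) unfolding fp_winner_def by simp
qed

section \<open>Order statistics\<close>

lemma kth_largest_ge_iff:
  assumes "1 \<le> k" "k \<le> m"
  shows "c \<le> kth_largest v m k \<longleftrightarrow> k \<le> card {t\<in>{1..m}. c \<le> v t}"
proof -
  define R where "R = rev (sort (map v [1..<m+1]))"
  have len: "length R = m" unfolding R_def by simp
  have antimono: "R ! j \<le> R ! i" if "i \<le> j" "j < m" for i j
    using that len unfolding R_def by (intro sorted_rev_nth_mono) auto
  have "card {i. i < m \<and> c \<le> R ! i} = length (filter (\<lambda>x. c \<le> x) R)"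
    by (simp add: length_filter_conv_card len)
  also have "\<dots> = length (filter (\<lambda>x. c \<le> x) (map v [1..<m+1]))"
    unfolding R_def by (metis mset_filter mset_rev mset_sort size_mset)
  also have "\<dots> = length (filter (\<lambda>t. c \<le> v t) [1..<m+1])"
    by (simp add: filter_map comp_def)
  also have "\<dots> = card {t\<in>{1..m}. c \<le> v t}"
    by (subst distinct_length_filter) (auto intro: arg_cong[where f = card])
  finally have count: "card {t\<in>{1..m}. c \<le> v t} = card {i. i < m \<and> c \<le> R ! i}" ..
  have kth: "kth_largest v m k = R ! (k - 1)" unfolding kth_largest_def R_def ..
  show ?thesis
  proof
    assume c: "c \<le> kth_largest v m k"
    have "{..<k} \<subseteq> {i. i < m \<and> c \<le> R ! i}"
    proof
      fix i assume "i \<in> {..<k}"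
      then have "i \<le> k - 1" "k - 1 < m" using assms by auto
      then show "i \<in> {i. i < m \<and> c \<le> R ! i}" using antimono c unfolding kth by fastforce
    qed
    then show "k \<le> card {t\<in>{1..m}. c \<le> v t}"
      unfolding count by (metis card_lessThan card_mono finite_Collect_conjI finite_Collect_less_nat)
  next
    assume k: "k \<le> card {t\<in>{1..m}. c \<le> v t}"
    show "c \<le> kth_largest v m k"
    proof (rule ccontr)
      assume "\<not> c \<le> kth_largest v m k"
      then have lt: "R ! (k - 1) < c" unfolding kth by simp
      have "{i. i < m \<and> c \<le> R ! i} \<subseteq> {..<k - 1}"
      proof
        fix i assume "i \<in> {i. i < m \<and> c \<le> R ! i}"
        then show "i \<in> {..<k - 1}" using lt antimono[of "k - 1" i] by (cases "i < k - 1") auto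
      qed
      then have "card {i. i < m \<and> c \<le> R ! i} \<le> k - 1"
        by (metis card_lessThan card_mono finite_lessThan)
      then show False using k assms unfolding count by simp
    qed
  qed
qed

lemma kth_largest_in_image:
  assumes "1 \<le> k" "k \<le> m"
  shows "kth_largest v m k \<in> v ` {1..m}"
proof -
  have "kth_largest v m k \<in> set (rev (sort (map v [1..<m+1])))"
    unfolding kth_largest_def using assms by (intro nth_mem) simp
  then show ?thesis by auto
qed

section \<open>Independent samples\<close>

locale iid_samples = real_distribution M for M :: "real measure" +
  fixes n m :: nat
begin

abbreviation \<Omega> :: "(nat \<times> nat \<Rightarrow> real) measure" where
  "\<Omega> \<equiv> sample_space M n m"

sublocale samples: product_prob_space "\<lambda>_. M" "{1..n} \<times> {1..m}" ..

lemma prob_space_sample_space: "prob_space \<Omega>"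
  unfolding sample_space_def by (rule prob_space_PiM) (rule prob_space_axioms)

sublocale \<Omega>: prob_space \<Omega>
  by (rule prob_space_sample_space)

lemma AE_samples_in_unit_interval:
  assumes "measure M {0..1} = 1"
  shows "AE s in \<Omega>. \<forall>a\<in>{1..n} \<times> {1..m}. s a \<in> {0..1}"
  unfolding sample_space_def
  by (intro AE_finite_allI samples.AE_component AE_prob_1 assms) auto

definition exceedance_event :: "nat \<Rightarrow> real \<Rightarrow> nat set \<Rightarrow> (nat \<times> nat \<Rightarrow> real) set" where
  "exceedance_event i c S = {s \<in> space \<Omega>. {t\<in>{1..m}. c \<le> s (i, t)} = S}"

lemma exceedance_event_eq_Collect:
  assumes "S \<subseteq> {1..m}"
  shows "exceedance_event i c S =
    {s \<in> space \<Omega>. \<forall>a\<in>Pair i ` {1..m}. s a \<in> (if snd a \<in> S then {c..} else {..<c})}"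
  unfolding exceedance_event_def using assms by (auto simp: not_le) (meson atLeastAtMost_iff not_le)

lemma sets_exceedance_event:
  assumes "i \<in> {1..n}" "S \<subseteq> {1..m}"
  shows "exceedance_event i c S \<in> sets \<Omega>"
  unfolding exceedance_event_eq_Collect[OF assms(2)] sample_space_def
  using assms(1) by (intro sets.sets_Collect_finite_All sets_Collect_single') auto

lemma measure_exceedance_event:
  assumes "i \<in> {1..n}" "S \<subseteq> {1..m}"
  shows "measure \<Omega> (exceedance_event i c S) =
    measure M {c..} ^ card S * (1 - measure M {c..}) ^ card ({1..m} - S)"
proof -
  let ?X = "\<lambda>a. if snd a \<in> S then {c..} else {..<c}"
  have "emeasure \<Omega> (exceedance_event i c S) = (\<Prod>a\<in>Pair i ` {1..m}. emeasure M (?X a))"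
    unfolding exceedance_event_eq_Collect[OF assms(2)] sample_space_def
    by (rule samples.emeasure_PiM_Collect) (use assms(1) in auto)
  also have "\<dots> = ennreal (\<Prod>a\<in>Pair i ` {1..m}. measure M (?X a))"
    unfolding emeasure_eq_measure by (rule prod_ennreal) simp
  finally have "measure \<Omega> (exceedance_event i c S) = (\<Prod>a\<in>Pair i ` {1..m}. measure M (?X a))"
    unfolding \<Omega>.emeasure_eq_measure by (simp add: prod_nonneg)
  also have "\<dots> = (\<Prod>t\<in>{1..m}. measure M (?X (i, t)))"
    by (subst prod.reindex) (auto simp: inj_on_def)
  also have "\<dots> = (\<Prod>t\<in>{1..m}. if t \<in> S then measure M {c..} else 1 - measure M {c..})"
  proof (rule prod.cong[OF refl])
    have "measure M {..<c} = measure M (space M - {c..})"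
      by (rule arg_cong[where f = "measure M"]) auto
    also have "\<dots> = 1 - measure M {c..}"
      by (rule prob_compl) simp
    finally show "measure M (?X (i, t)) = (if t \<in> S then measure M {c..} else 1 - measure M {c..})"
      for t by simp
  qed
  also have "\<dots> = measure M {c..} ^ card S * (1 - measure M {c..}) ^ card ({1..m} - S)"
    using assms(2) by (simp add: prod.If_cases Int_absorb1 Diff_eq)
  finally show ?thesis .
qed

lemma count_ge_eq_UN_exceedance_event:
  "{s \<in> space \<Omega>. k \<le> card {t\<in>{1..m}. c \<le> s (i, t)}} =
    (\<Union>S\<in>{S. S \<subseteq> {1..m} \<and> k \<le> card S}. exceedance_event i c S)"
  unfolding exceedance_event_def by auto

lemma sets_count_ge:
  assumes "i \<in> {1..n}"
  shows "{s \<in> space \<Omega>. k \<le> card {t\<in>{1..m}. c \<le> s (i, t)}} \<in> sets \<Omega>"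
  unfolding count_ge_eq_UN_exceedance_event
  using assms by (intro sets.finite_UN sets_exceedance_event) auto

lemma measure_count_ge:
  assumes "i \<in> {1..n}"
  shows "measure \<Omega> {s \<in> space \<Omega>. k \<le> card {t\<in>{1..m}. c \<le> s (i, t)}} =
    binomial_tail {1..m} k (measure M {c..})"
proof -
  let ?F = "{S. S \<subseteq> {1..m} \<and> k \<le> card S}"
  have "disjoint_family_on (exceedance_event i c) ?F"
    unfolding disjoint_family_on_def exceedance_event_def by blast
  moreover have "exceedance_event i c ` ?F \<subseteq> sets \<Omega>"
    using sets_exceedance_event[OF assms] by blast
  ultimately have "measure \<Omega> (\<Union>S\<in>?F. exceedance_event i c S) = (\<Sum>S\<in>?F. measure \<Omega> (exceedance_event i c S))"
    by (intro \<Omega>.finite_measure_finite_Union) auto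
  also have "\<dots> = binomial_tail {1..m} k (measure M {c..})"
    unfolding binomial_tail_def using assms by (intro sum.cong refl measure_exceedance_event) auto
  finally show ?thesis
    unfolding count_ge_eq_UN_exceedance_event .
qed

lemma kth_largest_sample_measurable:
  assumes "i \<in> {1..n}" "1 \<le> k" "k \<le> m"
  shows "(\<lambda>s. kth_largest (\<lambda>t. s (i, t)) m k) \<in> borel_measurable \<Omega>"
proof (rule borel_measurableI_ge)
  fix c
  show "{s \<in> space \<Omega>. c \<le> kth_largest (\<lambda>t. s (i, t)) m k} \<in> sets \<Omega>"
    unfolding kth_largest_ge_iff[OF assms(2,3)] by (rule sets_count_ge[OF assms(1)])
qed

lemma AE_kth_largest_sample_in_unit_interval:
  assumes "measure M {0..1} = 1" "i \<in> {1..n}" "1 \<le> k" "k \<le> m"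
  shows "AE s in \<Omega>. kth_largest (\<lambda>t. s (i, t)) m k \<in> {0..1}"
  using AE_samples_in_unit_interval[OF assms(1)]
proof eventually_elim
  case (elim s)
  then show ?case using kth_largest_in_image[OF assms(3,4), of "\<lambda>t. s (i, t)"] assms(2) by auto
qed

lemma integrable_kth_largest_sample:
  assumes "measure M {0..1} = 1" "i \<in> {1..n}" "1 \<le> k" "k \<le> m"
  shows "integrable \<Omega> (\<lambda>s. kth_largest (\<lambda>t. s (i, t)) m k)"
proof -
  have "AE s in \<Omega>. norm (kth_largest (\<lambda>t. s (i, t)) m k) \<le> 1"
    using AE_kth_largest_sample_in_unit_interval[OF assms] by eventually_elim auto
  then show ?thesis
    by (rule \<Omega>.integrable_const_bound[OF _ kth_largest_sample_measurable[OF assms(2-4)]])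
qed

lemma integral_kth_largest_sample_nonneg:
  assumes "measure M {0..1} = 1" "i \<in> {1..n}" "1 \<le> k" "k \<le> m"
  shows "0 \<le> (\<integral>s. kth_largest (\<lambda>t. s (i, t)) m k \<partial>\<Omega>)"
  using AE_kth_largest_sample_in_unit_interval[OF assms] by (intro integral_nonneg_AE) auto

lemma integral_kth_largest_sample_le_1:
  assumes "measure M {0..1} = 1" "i \<in> {1..n}" "1 \<le> k" "k \<le> m"
  shows "(\<integral>s. kth_largest (\<lambda>t. s (i, t)) m k \<partial>\<Omega>) \<le> 1"
proof -
  have "(\<integral>s. kth_largest (\<lambda>t. s (i, t)) m k \<partial>\<Omega>) \<le> (\<integral>s. 1 \<partial>\<Omega>)"
    using AE_kth_largest_sample_in_unit_interval[OF assms]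
    by (intro integral_mono_AE integrable_kth_largest_sample[OF assms]) auto
  then show ?thesis by (simp add: \<Omega>.prob_space)
qed

lemma integral_kth_largest_sample_ge:
  assumes "measure M {0..1} = 1" "i \<in> {1..n}" "1 \<le> k" "k \<le> m" and "0 \<le> c"
  shows "c * binomial_tail {1..m} k (measure M {c..}) \<le> (\<integral>s. kth_largest (\<lambda>t. s (i, t)) m k \<partial>\<Omega>)"
proof -
  define E where "E = {s \<in> space \<Omega>. k \<le> card {t\<in>{1..m}. c \<le> s (i, t)}}"
  have E: "E \<in> sets \<Omega>"
    unfolding E_def by (rule sets_count_ge[OF assms(2)])
  have "c * binomial_tail {1..m} k (measure M {c..}) = c * measure \<Omega> E"
    unfolding E_def measure_count_ge[OF assms(2)] ..
  also have "\<dots> = (\<integral>s. c * indicator E s \<partial>\<Omega>)"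
    using E by simp
  also have "\<dots> \<le> (\<integral>s. kth_largest (\<lambda>t. s (i, t)) m k \<partial>\<Omega>)"
  proof (rule integral_mono_AE)
    show "integrable \<Omega> (\<lambda>s. c * indicator E s)"
      using E by (simp add: \<Omega>.emeasure_eq_measure)
    show "integrable \<Omega> (\<lambda>s. kth_largest (\<lambda>t. s (i, t)) m k)"
      by (rule integrable_kth_largest_sample[OF assms(1-4)])
    show "AE s in \<Omega>. c * indicator E s \<le> kth_largest (\<lambda>t. s (i, t)) m k"
      using AE_kth_largest_sample_in_unit_interval[OF assms(1-4)]
    proof eventually_elim
      case (elim s)
      show ?case
      proof (cases "s \<in> E")
        case True
        then show ?thesis
          unfolding E_def using kth_largest_ge_iff[OF assms(3,4)] by auto
      qed (use elim in simp)
    qed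
  qed
  finally show ?thesis .
qed

end

section \<open>Quantiles\<close>

context real_distribution
begin

lemma measure_atMost_negative:
  assumes "measure M {0..1} = 1" "y < 0"
  shows "measure M {x. x \<le> y} = 0"
proof -
  have "measure M {x. x \<le> y} \<le> measure M (space M - {0..1})"
    using assms(2) by (intro finite_measure_mono) auto
  also have "\<dots> = 0"
    using prob_compl[of "{0..1}"] assms(1) by simp
  finally show ?thesis by (simp add: measure_le_0_iff)
qed

lemma bdd_above_quantile_set:
  assumes "measure M {0..1} = 1" "p < 1"
  shows "bdd_above {y. measure M {x. x \<le> y} \<le> p}"
proof (rule bdd_aboveI)
  fix y assume y: "y \<in> {y. measure M {x. x \<le> y} \<le> p}"
  show "y \<le> 1"
  proof (rule ccontr)
    assume "\<not> y \<le> 1"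
    then have "measure M {0..1} \<le> measure M {x. x \<le> y}"
      by (intro finite_measure_mono) auto
    then show False using y assms by simp
  qed
qed

lemma quantile_Q_nonneg:
  assumes "measure M {0..1} = 1" "0 \<le> p" "p < 1"
  shows "0 \<le> quantile_Q M p"
  unfolding quantile_Q_def
proof (rule dense_le)
  fix y :: real assume "y < 0"
  then show "y \<le> Sup {y. measure M {x. x \<le> y} \<le> p}"
    using measure_atMost_negative[OF assms(1)] assms(2)
    by (intro cSup_upper bdd_above_quantile_set[OF assms(1,3)]) auto
qed

lemma measure_atLeast_quantile_Q:
  assumes "measure M {0..1} = 1" "0 \<le> p" "p < 1"
  shows "1 - p \<le> measure M {quantile_Q M p..}"
proof -
  let ?S = "{y. measure M {x. x \<le> y} \<le> p}" and ?Q = "quantile_Q M p"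
  have "-1 \<in> ?S" using measure_atMost_negative[OF assms(1)] assms(2) by simp
  then have nonempty: "?S \<noteq> {}" by blast
  have "cdf M y \<le> p" if "y < ?Q" for y
  proof -
    have "y < Sup ?S" using that unfolding quantile_Q_def .
    then obtain y' where "y' \<in> ?S" "y < y'"
      using less_cSup_iff[OF nonempty bdd_above_quantile_set[OF assms(1,3)]] by blast
    then show ?thesis using cdf_nondecreasing[of y y'] unfolding cdf_def2 atMost_def by simp
  qed
  then have "eventually (\<lambda>y. cdf M y \<le> p) (at_left ?Q)"
    by (intro eventually_at_leftI[of "?Q - 1"]) auto
  then have "measure M {..<?Q} \<le> p"
    by (rule tendsto_upperbound[OF cdf_at_left _ trivial_limit_at_left_real])
  moreover have "measure M {?Q..} = measure M (space M - {..<?Q})"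
    by (rule arg_cong[where f = "measure M"]) auto
  moreover have "measure M (space M - {..<?Q}) = 1 - measure M {..<?Q}"
    by (rule prob_compl) simp
  ultimately show ?thesis
    by linarith
qed

end

section \<open>Expected welfare\<close>

context iid_samples
begin

lemma expected_sw_eq_sum_integral:
  assumes "measure M {0..1} = 1" "is_profile n m pos" "j \<in> {1..m}"
  shows "expected_sw M n m pos j = (\<Sum>i\<in>{1..n}. \<integral>s. kth_largest (\<lambda>t. s (i, t)) m (pos i j) \<partial>\<Omega>)"
  unfolding expected_sw_def sw_def utility_def
  using profile_position_mem[OF assms(2) _ assms(3)]
  by (intro Bochner_Integration.integral_sum integrable_kth_largest_sample[OF assms(1)]) auto

lemma expected_sw_nonneg:
  assumes "measure M {0..1} = 1" "is_profile n m pos" "j \<in> {1..m}"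
  shows "0 \<le> expected_sw M n m pos j"
  unfolding expected_sw_eq_sum_integral[OF assms]
  using profile_position_mem[OF assms(2) _ assms(3)]
  by (intro sum_nonneg integral_kth_largest_sample_nonneg[OF assms(1)]) auto

lemma expected_sw_le:
  assumes "measure M {0..1} = 1" "is_profile n m pos" "j \<in> {1..m}"
  shows "expected_sw M n m pos j \<le> real n"
proof -
  have "expected_sw M n m pos j \<le> (\<Sum>i\<in>{1..n}. 1)"
    unfolding expected_sw_eq_sum_integral[OF assms]
    using profile_position_mem[OF assms(2) _ assms(3)]
    by (intro sum_mono integral_kth_largest_sample_le_1[OF assms(1)]) auto
  then show ?thesis by simp
qed

lemma fp_score_le_expected_sw:
  assumes "measure M {0..1} = 1" "is_profile n m pos" "j \<in> {1..m}"
    and "0 \<le> c" "p \<le> 1" "1 - p \<le> measure M {c..}"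
  shows "c * fp_score p n m pos j \<le> expected_sw M n m pos j"
proof -
  have "c * fp_points p m k \<le> (\<integral>s. kth_largest (\<lambda>t. s (i, t)) m k \<partial>\<Omega>)"
    if "i \<in> {1..n}" "k \<in> {1..m}" for i k
  proof -
    have "fp_points p m k \<le> binomial_tail {1..m} k (measure M {c..})"
      unfolding fp_points_eq_binomial_tail using assms(5,6) by (intro binomial_tail_mono) auto
    then have "c * fp_points p m k \<le> c * binomial_tail {1..m} k (measure M {c..})"
      using assms(4) by (rule mult_left_mono)
    also have "\<dots> \<le> (\<integral>s. kth_largest (\<lambda>t. s (i, t)) m k \<partial>\<Omega>)"
      using that by (intro integral_kth_largest_sample_ge assms(1,4)) auto
    finally show ?thesis .
  qed
  then show ?thesis
    unfolding fp_score_def expected_sw_eq_sum_integral[OF assms(1-3)] sum_distrib_left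
    using profile_position_mem[OF assms(2) _ assms(3)] by (intro sum_mono) auto
qed

end

theorem corollary2:
  fixes D :: "real measure" and p :: real and n m :: nat and pos :: "nat \<Rightarrow> nat \<Rightarrow> nat" and w :: nat
  assumes "0 < p" and "p \<le> 1"
    and "prob_space D" and "sets D = sets borel" and "measure D {0..1} = 1"
    and "is_profile n m pos"
    and "fp_winner p n m pos w"
  shows "expected_sw D n m pos w \<ge>
           (1 - p) * quantile_Q D p * (MAX j\<in>{1..m}. expected_sw D n m pos j)"
proof -
  interpret iid_samples D n m
    using assms(3,4) by (simp add: iid_samples_def real_distribution_def real_distribution_axioms_def)
  have w: "w \<in> {1..m}"
    using assms(7) unfolding fp_winner_def by simp
  have max_le: "(MAX j\<in>{1..m}. expected_sw D n m pos j) \<le> real n"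
    using w expected_sw_le[OF assms(5,6)] by (intro Max.boundedI) auto
  \<comment> \<open>For \<open>p = 1\<close> the quantile is the supremum of an unbounded set, a junk value, so this
    case has to be carried by the factor \<open>1 - p = 0\<close>.\<close>
  show ?thesis
  proof (cases "p = 1")
    case True
    then show ?thesis using expected_sw_nonneg[OF assms(5,6) w] by simp
  next
    case False
    define Q where "Q = quantile_Q D p"
    have Q: "0 \<le> Q" "1 - p \<le> measure D {Q..}"
      using quantile_Q_nonneg measure_atLeast_quantile_Q assms(1,2,5) False unfolding Q_def by auto
    have "(1 - p) * Q * (MAX j\<in>{1..m}. expected_sw D n m pos j) \<le> (1 - p) * Q * real n"
      using Q(1) assms(2) by (intro mult_left_mono max_le) auto
    also have "\<dots> = Q * (real n * (1 - p))"
      by simp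
    also have "\<dots> \<le> Q * fp_score p n m pos w"
      using fp_winner_score_ge[OF assms(6,7)] Q(1) by (rule mult_left_mono)
    also have "\<dots> \<le> expected_sw D n m pos w"
      using fp_score_le_expected_sw[OF assms(5,6) w Q(1) assms(2) Q(2)] .
    finally show ?thesis unfolding Q_def .
  qed
qed

end
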